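(* Let $p$ be a prime, $m\ge0$, and let $X\hookrightarrow Y$ be an immersion of schemes of characteristic $p$ defined by an ideal $\mathcal I\subset\mathcal O_Y$. Then the map $\mathcal I\to\mathcal P_{Xm}(Y)$, $\varphi\mapsto\varphi^{\{p^{m+1}\}}$, composed with the projection $\mathcal P_{Xm}(Y)\to\mathcal P_{Xm}(Y)/\mathcal I\mathcal P_{Xm}(Y)$, is $F^*$-linear (additive, and $f\varphi\mapsto f^{p^{m+1}}\cdot(\text{image of }\varphi)$ for $f\in\mathcal O_Y$) and vanishes on $\mathcal I^2$.
   Context: $F$ denotes the $(m+1)$-st iterate of the absolute Frobenius, $f\mapsto f^{p^{m+1}}$. A divided power structure of level $m$ on an ideal $\mathcal I$ is an ideal $\mathcal J$ with usual divided powers $x\mapsto x^{[k]}$ such that $\mathcal I^{(p^m)}+p\mathcal I\subset\mathcal J\subset\mathcal I$, where $\mathcal I^{(p^m)}$ is generated by $p^m$-th powers. The partial divided powers are $f^{\{k\}}=f^r(f^{p^m})^{[q]}$ for $k=qp^m+r$, $0\le r<p^m$; they satisfy $f^{\{k\}}f^{\{l\}}=\frac{q_{k+l}!}{q_k!\,q_l!}f^{\{k+l\}}$, where $q_n=\lfloor n/p^m\rfloor$. $\mathcal P_{Xm}(Y)$ is the structure sheaf of the divided power envelope of level $m$ of $X$ in $Y$, i.e. the universal immersion of $X$ with a divided power structure of level $m$ on its ideal (compatible with a fixed one on the base). $\mathcal I$ maps into its level $m$ divided power ideal, and $\mathcal I\mathcal P_{Xm}(Y)$ is the ideal generated by $\mathcal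 I$. *)

theory Defs
  imports "HOL-Algebra.Algebra" "HOL-Computational_Algebra.Primes"
begin

definition divided_powers :: "('b, 'c) ring_scheme \<Rightarrow> 'b set \<Rightarrow> (nat \<Rightarrow> 'b \<Rightarrow> 'b) \<Rightarrow> bool" where
  "divided_powers P J gam \<longleftrightarrow>
     ideal J P \<and>
     (\<forall>x\<in>J. gam 0 x = \<one>\<^bsub>P\<^esub> \<and> gam 1 x = x \<and> (\<forall>n\<ge>1. gam n x \<in> J)) \<and>
     (\<forall>x\<in>J. \<forall>y\<in>J. \<forall>n. gam n (x \<oplus>\<^bsub>P\<^esub> y) =
         (\<Oplus>\<^bsub>P\<^esub>i\<in>{..n}. gam i x \<otimes>\<^bsub>P\<^esub> gam (n - i) y)) \<and>
     (\<forall>a\<in>carrier P. \<forall>x\<in>J. \<forall>n. gam n (a \<otimes>\<^bsub>P\<^esub> x) = a [^]\<^bsub>P\<^esub> n \<otimes>\<^bsub>P\<^esub> gam n x) \<and>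
     (\<forall>x\<in>J. \<forall>i j. gam i x \<otimes>\<^bsub>P\<^esub> gam j x = add_pow P ((i + j) choose i) (gam (i + j) x)) \<and>
     (\<forall>x\<in>J. \<forall>i j. j \<ge> 1 \<longrightarrow>
         gam i (gam j x) = add_pow P (fact (i * j) div (fact i * fact j ^ i) :: nat) (gam (i * j) x))"

definition pd_level :: "('b, 'c) ring_scheme \<Rightarrow> nat \<Rightarrow> nat \<Rightarrow> 'b set \<Rightarrow> 'b set \<Rightarrow> (nat \<Rightarrow> 'b \<Rightarrow> 'b) \<Rightarrow> bool" where
  "pd_level P p m K J gam \<longleftrightarrow>
     ideal K P \<and> divided_powers P J gam \<and> J \<subseteq> K \<and>
     (\<forall>x\<in>K. x [^]\<^bsub>P\<^esub> (p ^ m) \<in> J) \<and>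
     (\<forall>x\<in>K. add_pow P p x \<in> J)"

definition partial_dp :: "('b, 'c) ring_scheme \<Rightarrow> nat \<Rightarrow> nat \<Rightarrow> (nat \<Rightarrow> 'b \<Rightarrow> 'b) \<Rightarrow> nat \<Rightarrow> 'b \<Rightarrow> 'b" where
  "partial_dp P p m gam k f =
     f [^]\<^bsub>P\<^esub> (k mod p ^ m) \<otimes>\<^bsub>P\<^esub> gam (k div p ^ m) (f [^]\<^bsub>P\<^esub> (p ^ m))"

text \<open>Data (h, K, J, gam) on a ring P over A, with h(I) \<subseteq> K, together with compatibility
  with the base PD structure (S, a, b, delta) via g : S \<rightarrow> A (the composite S \<rightarrow> P is a
  morphism of PD rings).\<close>
definition pd_over :: "('s, 't) ring_scheme \<Rightarrow> 's set \<Rightarrow> (nat \<Rightarrow> 's \<Rightarrow> 's) \<Rightarrow> ('s \<Rightarrow> 'a) \<Rightarrow>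
    ('a, 'e) ring_scheme \<Rightarrow> 'a set \<Rightarrow> nat \<Rightarrow> nat \<Rightarrow>
    ('b, 'c) ring_scheme \<Rightarrow> ('a \<Rightarrow> 'b) \<Rightarrow> 'b set \<Rightarrow> 'b set \<Rightarrow> (nat \<Rightarrow> 'b \<Rightarrow> 'b) \<Rightarrow> bool" where
  "pd_over S bb delta g A I p m P h K J gam \<longleftrightarrow>
     cring P \<and> h \<in> ring_hom A P \<and> pd_level P p m K J gam \<and> h ` I \<subseteq> K \<and>
     (h \<circ> g) ` bb \<subseteq> J \<and> (\<forall>s\<in>bb. \<forall>n. gam n (h (g s)) = h (g (delta n s)))"

text \<open>(P, h, K, J, gam) is the divided power envelope of level m of I in A (compatible with
  the base): universal among all such data (on rings of the same carrier type).\<close>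
definition is_pd_envelope :: "('s, 't) ring_scheme \<Rightarrow> 's set \<Rightarrow> (nat \<Rightarrow> 's \<Rightarrow> 's) \<Rightarrow> ('s \<Rightarrow> 'a) \<Rightarrow>
    ('a, 'e) ring_scheme \<Rightarrow> 'a set \<Rightarrow> nat \<Rightarrow> nat \<Rightarrow>
    ('b, 'c) ring_scheme \<Rightarrow> ('a \<Rightarrow> 'b) \<Rightarrow> 'b set \<Rightarrow> 'b set \<Rightarrow> (nat \<Rightarrow> 'b \<Rightarrow> 'b) \<Rightarrow> bool" where
  "is_pd_envelope S bb delta g A I p m P h K J gam \<longleftrightarrow>
     pd_over S bb delta g A I p m P h K J gam \<and>
     (\<forall>(P' :: ('b, 'c) ring_scheme) h' K' J' gam'.
        pd_over S bb delta g A I p m P' h' K' J' gam' \<longrightarrow>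
        (let mor = (\<lambda>u. u \<in> ring_hom P P' \<and> (\<forall>x\<in>carrier A. u (h x) = h' x) \<and>
                          u ` K \<subseteq> K' \<and> u ` J \<subseteq> J' \<and>
                          (\<forall>x\<in>J. \<forall>n. u (gam n x) = gam' n (u x)))
         in (\<exists>u. mor u) \<and> (\<forall>u1 u2. mor u1 \<and> mor u2 \<longrightarrow> (\<forall>x\<in>carrier P. u1 x = u2 x))))"

end

theory Submission
  imports Defs
begin

text \<open>For \<open>\<phi>\<close> in the ideal, \<open>\<phi>^(p^m)\<close> lies in the divided power ideal and
  \<open>\<phi>^{p^(m+1)} = \<gamma>_p(\<phi>^(p^m))\<close>. In characteristic \<open>p\<close> the map \<open>\<phi> \<mapsto> \<phi>^(p^m)\<close> is a ring
  endomorphism, so \<open>\<gamma>_p(c x) = c^p \<gamma>_p(x)\<close> gives the semilinearity on the nose. Additivity holds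
  modulo \<open>I\<P>\<close> since \<open>\<gamma>_p(a + b) - \<gamma>_p(a) - \<gamma>_p(b) = \<Sum>_(0<i<p) \<gamma>_i(a) \<gamma>_(p-i)(b)\<close>, and for \<open>i < p\<close>
  the factorial \<open>i!\<close> is invertible mod \<open>p\<close>, so \<open>\<gamma>_i(a)\<close> is an integer multiple of \<open>a^i\<close>.
  For a product, \<open>(\<phi>\<psi>)^{p^(m+1)} = \<phi>^(p^(m+1)) \<psi>^{p^(m+1)}\<close> lies in \<open>I\<P>\<close>, and additivity
  modulo \<open>I\<P>\<close> extends this to all of \<open>I\<^sup>2\<close>.\<close>

lemma ring_hom_add_pow:
  fixes n :: nat
  assumes "h \<in> ring_hom R S" and "ring R" and "ring S" and "x \<in> carrier R"
  shows "h (add_pow R n x) = add_pow S n (h x)"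
proof -
  interpret ring_hom_ring R S h
    using assms by (intro ring_hom_ringI2) auto
  show ?thesis
    using group_hom.hom_nat_pow[OF a_group_hom, of x n] assms(4) by (simp add: add_pow_def)
qed

lemma (in ring) add_pow_eq_zero_if_char_dvd:
  fixes p n :: nat
  assumes char: "add_pow R p \<one> = \<zero>" and "p dvd n" and z: "z \<in> carrier R"
  shows "add_pow R n z = \<zero>"
proof -
  obtain c where n: "n = p * c" using \<open>p dvd n\<close> by blast
  have "add_pow R p z = add_pow R p \<one> \<otimes> z"
    using z add_pow_ldistr[of \<one> z p] by simp
  then have "add_pow R p z = \<zero>" using char z by simp
  then show ?thesis
    using z add.nat_pow_pow[of z c p] by (simp add: n)
qed

lemma (in ideal) I_finsum_closed:
  assumes "finite A" and "\<And>i. i \<in> A \<Longrightarrow> f i \<in> I"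
  shows "finsum R f A \<in> I"
  using assms
proof (induction A rule: finite_induct)
  case empty
  then show ?case by (simp add: additive_subgroup.zero_closed is_additive_subgroup)
next
  case (insert a A)
  then have "f \<in> A \<rightarrow> carrier R" and "f a \<in> carrier R" by (auto intro: Icarr)
  then show ?case
    using insert by (simp add: finsum_insert additive_subgroup.a_closed is_additive_subgroup)
qed

lemma (in ideal) I_nat_pow_closed:
  fixes n :: nat
  assumes "x \<in> I" and "n > 0"
  shows "x [^] n \<in> I"
proof -
  obtain k where "n = Suc k" using \<open>n > 0\<close> gr0_conv_Suc by blast
  then show ?thesis using assms(1) Icarr I_l_closed by simp
qed

lemma (in ideal) I_add_pow_closed:
  fixes n :: nat
  assumes "x \<in> I"
  shows "add_pow R n x \<in> I"
  using assms Icarr add_pow_ldistr[of \<one> x n] I_l_closed[OF assms, of "add_pow R n \<one>"] by simp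

lemma (in ideal) mem_I_if_minus_mem_I:
  assumes "x \<in> carrier R" and "x \<ominus> y \<in> I" and "y \<in> I"
  shows "x \<in> I"
proof -
  have "x = (x \<ominus> y) \<oplus> y"
    using assms by (simp add: Icarr minus_eq a_assoc l_neg)
  then show ?thesis
    using assms(2,3) by (metis additive_subgroup.a_closed is_additive_subgroup)
qed

lemma (in abelian_monoid) finsum_atMost_Suc_Suc:
  assumes "f \<in> {..Suc (Suc r)} \<rightarrow> carrier G"
  shows "finsum G f {..Suc (Suc r)} = f (Suc (Suc r)) \<oplus> (finsum G (\<lambda>i. f (Suc i)) {..r} \<oplus> f 0)"
proof -
  have "finsum G f {..Suc (Suc r)} = f (Suc (Suc r)) \<oplus> finsum G f {..Suc r}"
    using assms by (intro finsum_Suc) auto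
  also have "finsum G f {..Suc r} = finsum G (\<lambda>i. f (Suc i)) {..r} \<oplus> f 0"
    using assms by (intro finsum_Suc2) auto
  finally show ?thesis .
qed

lemma (in cring) nat_pow_add_binomial:
  assumes a: "a \<in> carrier R" and b: "b \<in> carrier R"
  shows "(a \<oplus> b) [^] n = (\<Oplus>k\<in>{..n}. add_pow R (n choose k) (a [^] k \<otimes> b [^] (n - k)))"
proof (induction n)
  case 0
  then show ?case using a b by simp
next
  case (Suc n)
  define B where "B = (\<Oplus>k\<in>{..n}. add_pow R (n choose k) (a [^] k \<otimes> b [^] (n - k)))"
  define t where "t = (\<lambda>k. a [^] Suc k \<otimes> b [^] (n - k))"
  define s where "s = (\<lambda>k. a [^] k \<otimes> b [^] (Suc n - k))"
  have tc: "\<And>k. t k \<in> carrier R" unfolding t_def using a b by simp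
  have sc: "\<And>k. s k \<in> carrier R" unfolding s_def using a b by simp
  have Bc: "B \<in> carrier R" unfolding B_def using a b by (auto intro!: finsum_closed)
  have "(a \<oplus> b) [^] Suc n = B \<otimes> a \<oplus> B \<otimes> b"
    using Suc a b Bc by (simp add: B_def r_distr)
  also have "B \<otimes> a = (\<Oplus>k\<in>{..n}. add_pow R (n choose k) (t k))"
    unfolding B_def using a b
    by (subst finsum_ldistr) (auto intro!: finsum_cong simp: add_pow_ldistr add_pow_rdistr t_def m_ac)
  also have "B \<otimes> b = (\<Oplus>k\<in>{..n}. add_pow R (n choose k) (s k))"
    unfolding B_def using a b
    by (subst finsum_ldistr)
      (auto intro!: finsum_cong simp: add_pow_ldistr add_pow_rdistr s_def m_ac Suc_diff_le)
  also have "\<dots> = (\<Oplus>k\<in>{..Suc n}. add_pow R (n choose k) (s k))"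
    using sc by (simp add: binomial_eq_0)
  also have "\<dots> = (\<Oplus>k\<in>{..n}. add_pow R (n choose Suc k) (t k)) \<oplus> b [^] Suc n"
    using sc b by (subst finsum_Suc2) (auto simp: s_def t_def)
  finally have "(a \<oplus> b) [^] Suc n = (\<Oplus>k\<in>{..n}. add_pow R (n choose k) (t k)) \<oplus>
     ((\<Oplus>k\<in>{..n}. add_pow R (n choose Suc k) (t k)) \<oplus> b [^] Suc n)" .
  also have "\<dots> = (\<Oplus>k\<in>{..n}. add_pow R (n choose k) (t k) \<oplus> add_pow R (n choose Suc k) (t k))
      \<oplus> b [^] Suc n"
    using tc b by (simp add: finsum_addf a_assoc)
  also have "\<dots> = (\<Oplus>k\<in>{..n}. add_pow R (Suc n choose Suc k) (t k)) \<oplus> b [^] Suc n"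
    using tc by (simp add: add.nat_pow_mult)
  also have "\<dots> = (\<Oplus>k\<in>{..Suc n}. add_pow R (Suc n choose k) (a [^] k \<otimes> b [^] (Suc n - k)))"
    using a b by (subst finsum_Suc2) (auto simp: t_def)
  finally show ?case .
qed

lemma (in cring) frobenius_add:
  assumes p: "Factorial_Ring.prime (p::nat)" and char: "add_pow R p \<one> = \<zero>"
    and a: "a \<in> carrier R" and b: "b \<in> carrier R"
  shows "(a \<oplus> b) [^] p = a [^] p \<oplus> b [^] p"
proof -
  obtain r where p_eq: "p = Suc (Suc r)"
    using prime_ge_2_nat[OF p] by (metis add_2_eq_Suc le_Suc_ex)
  define f where "f = (\<lambda>k. add_pow R (p choose k) (a [^] k \<otimes> b [^] (p - k)))"
  have fc: "\<And>k. f k \<in> carrier R" unfolding f_def using a b by simp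
  have inner_terms_vanish: "f (Suc i) = \<zero>" if "i \<le> r" for i
  proof -
    have "p dvd (p choose Suc i)" using p p_eq that by (intro dvd_choose_prime) auto
    then show ?thesis unfolding f_def using a b add_pow_eq_zero_if_char_dvd[OF char] by simp
  qed
  have "(a \<oplus> b) [^] p = finsum R f {..Suc (Suc r)}"
    using nat_pow_add_binomial[OF a b, of p] p_eq by (simp add: f_def)
  also have "\<dots> = f (Suc (Suc r)) \<oplus> (finsum R (\<lambda>i. f (Suc i)) {..r} \<oplus> f 0)"
    by (rule finsum_atMost_Suc_Suc) (simp add: fc)
  also have "finsum R (\<lambda>i. f (Suc i)) {..r} = \<zero>"
    using inner_terms_vanish by (simp add: finsum_cong finsum_zero)
  finally show ?thesis using a b p_eq by (simp add: f_def)
qed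

lemma (in cring) frobenius_power_add:
  assumes "Factorial_Ring.prime (p::nat)" and "add_pow R p \<one> = \<zero>"
    and a: "a \<in> carrier R" and b: "b \<in> carrier R"
  shows "(a \<oplus> b) [^] (p ^ n) = a [^] (p ^ n) \<oplus> b [^] (p ^ n)"
proof (induction n)
  case 0
  then show ?case using a b by (simp add: nat_pow_eone)
next
  case (Suc n)
  have "(a \<oplus> b) [^] (p ^ Suc n) = ((a \<oplus> b) [^] (p ^ n)) [^] p"
    using a b by (simp add: nat_pow_pow mult.commute)
  also have "\<dots> = (a [^] (p ^ n)) [^] p \<oplus> (b [^] (p ^ n)) [^] p"
    using Suc a b by (simp add: frobenius_add[OF assms(1,2)])
  also have "\<dots> = a [^] (p ^ Suc n) \<oplus> b [^] (p ^ Suc n)"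
    using a b by (simp add: nat_pow_pow mult.commute)
  finally show ?case .
qed

lemma (in cring) divided_power_closed:
  assumes dp: "divided_powers R J gam" and a: "a \<in> J"
  shows "gam i a \<in> carrier R"
proof (cases "i = 0")
  case True
  then show ?thesis using dp a by (simp add: divided_powers_def)
next
  case False
  then have "gam i a \<in> J" using dp a by (simp add: divided_powers_def)
  moreover have "ideal J R" using dp by (simp add: divided_powers_def)
  ultimately show ?thesis by (rule ideal.Icarr[rotated])
qed

lemma (in cring) add_pow_fact_divided_power:
  assumes dp: "divided_powers R J gam" and a: "a \<in> J"
  shows "add_pow R (fact i :: nat) (gam i a) = a [^] i"
proof (induction i)
  case 0
  then show ?case using dp a by (simp add: divided_powers_def)
next
  case (Suc i)
  have "ideal J R" using dp by (simp add: divided_powers_def)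
  then have ac: "a \<in> carrier R" using a by (rule ideal.Icarr)
  have gam_one: "gam 1 a = a" using dp a by (simp add: divided_powers_def)
  have gam_mult: "gam i a \<otimes> gam 1 a = add_pow R (Suc i) (gam (Suc i) a)"
    using dp a unfolding divided_powers_def by (metis Suc_eq_plus1 binomial_Suc_n)
  have "a [^] Suc i = add_pow R (fact i :: nat) (gam i a) \<otimes> gam 1 a"
    using Suc.IH gam_one ac by simp
  also have "\<dots> = add_pow R (fact i :: nat) (gam i a \<otimes> gam 1 a)"
    using divided_power_closed[OF dp a] by (simp add: add_pow_ldistr)
  also have "\<dots> = add_pow R (fact i :: nat) (add_pow R (Suc i) (gam (Suc i) a))"
    by (simp only: gam_mult)
  also have "\<dots> = add_pow R (fact (Suc i) :: nat) (gam (Suc i) a)"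
    using divided_power_closed[OF dp a] add.nat_pow_pow[of "gam (Suc i) a" "fact i" "Suc i"]
    by (simp add: mult.commute del: add.nat_pow_Suc)
  finally show ?case by simp
qed

text \<open>A Bezout relation \<open>i! x = p y + 1\<close> inverts \<open>i!\<close> in characteristic \<open>p\<close>.\<close>
lemma (in cring) divided_power_eq_add_pow_nat_pow:
  assumes p: "Factorial_Ring.prime (p::nat)" and char: "add_pow R p \<one> = \<zero>"
    and dp: "divided_powers R J gam" and a: "a \<in> J" and "i < p"
  shows "\<exists>c::nat. gam i a = add_pow R c (a [^] i)"
proof -
  have "coprime p (fact i)"
    using p \<open>i < p\<close> by (simp add: prime_imp_coprime prime_dvd_fact_iff)
  then obtain x y :: nat where xy: "fact i * x = p * y + 1"
    using bezout_nat[of "fact i" p] by (auto simp: coprime_iff_gcd_eq_1 gcd.commute)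
  have gc: "gam i a \<in> carrier R" using divided_power_closed[OF dp a] .
  have "add_pow R x (a [^] i) = add_pow R (fact i * x) (gam i a)"
    using add_pow_fact_divided_power[OF dp a, of i] gc add.nat_pow_pow[of "gam i a" x "fact i"]
    by simp
  also have "\<dots> = gam i a"
    using xy gc add_pow_eq_zero_if_char_dvd[OF char, of "p * y"] add.nat_pow_mult[of "gam i a" "p * y" 1]
    by simp
  finally show ?thesis by metis
qed

lemma (in cring) divided_power_prime_add:
  assumes p: "Factorial_Ring.prime (p::nat)" and char: "add_pow R p \<one> = \<zero>"
    and dp: "divided_powers R J gam" and L: "ideal L R"
    and a: "a \<in> J" and b: "b \<in> J" and aL: "a \<in> L"
  shows "gam p (a \<oplus> b) \<ominus> (gam p a \<oplus> gam p b) \<in> L"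
proof -
  interpret L: ideal L R by (rule L)
  obtain r where p_eq: "p = Suc (Suc r)"
    using prime_ge_2_nat[OF p] by (metis add_2_eq_Suc le_Suc_ex)
  define f where "f = (\<lambda>i. gam i a \<otimes> gam (p - i) b)"
  define M where "M = finsum R (\<lambda>i. f (Suc i)) {..r}"
  have fc: "\<And>i. f i \<in> carrier R"
    unfolding f_def using divided_power_closed[OF dp a] divided_power_closed[OF dp b] by simp
  have "gam p (a \<oplus> b) = finsum R f {..Suc (Suc r)}"
    using dp a b p_eq unfolding divided_powers_def f_def by simp
  also have "\<dots> = f (Suc (Suc r)) \<oplus> (M \<oplus> f 0)"
    unfolding M_def by (rule finsum_atMost_Suc_Suc) (simp add: fc)
  also have "f (Suc (Suc r)) = gam p a"
    using dp b p_eq divided_power_closed[OF dp a] by (simp add: f_def divided_powers_def)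
  also have "f 0 = gam p b"
    using dp a divided_power_closed[OF dp b] by (simp add: f_def divided_powers_def)
  finally have expand: "gam p (a \<oplus> b) = gam p a \<oplus> (M \<oplus> gam p b)" .
  have "M \<in> L"
    unfolding M_def
  proof (rule L.I_finsum_closed)
    fix i assume "i \<in> {..r}"
    then obtain c :: nat where "gam (Suc i) a = add_pow R c (a [^] Suc i)"
      using divided_power_eq_add_pow_nat_pow[OF p char dp a, of "Suc i"] p_eq by auto
    then have "gam (Suc i) a \<in> L"
      using L.I_add_pow_closed L.I_nat_pow_closed[OF aL] by (metis zero_less_Suc)
    then show "f (Suc i) \<in> L"
      unfolding f_def using divided_power_closed[OF dp b] by (simp add: L.I_r_closed)
  qed simp
  moreover have "gam p (a \<oplus> b) \<ominus> (gam p a \<oplus> gam p b) = M"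
    using expand L.Icarr[OF \<open>M \<in> L\<close>] divided_power_closed[OF dp a] divided_power_closed[OF dp b]
    by (simp add: minus_eq minus_add a_ac r_neg)
  ultimately show ?thesis by simp
qed

lemma (in cring) partial_dp_p_pow_Suc:
  assumes dp: "divided_powers R J gam" and "p > 0" and "x [^] (p ^ m) \<in> J"
  shows "partial_dp R p m gam (p ^ (m + 1)) x = gam p (x [^] (p ^ m))"
proof -
  have "p ^ (m + 1) mod p ^ m = 0" and "p ^ (m + 1) div p ^ m = p"
    using \<open>p > 0\<close> by (simp_all add: mult.commute)
  then show ?thesis
    unfolding partial_dp_def using divided_power_closed[OF dp assms(3)] by simp
qed

lemma (in cring) partial_dp_p_pow_Suc_closed:
  assumes "p > 0" and pd: "pd_level R p m K J gam" and x: "x \<in> K"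
  shows "partial_dp R p m gam (p ^ (m + 1)) x \<in> carrier R"
proof -
  have dp: "divided_powers R J gam" and "x [^] (p ^ m) \<in> J"
    using pd x by (auto simp: pd_level_def)
  then show ?thesis
    using partial_dp_p_pow_Suc[OF dp \<open>p > 0\<close>] divided_power_closed[OF dp] by metis
qed

lemma (in cring) partial_dp_p_pow_Suc_add:
  assumes p: "Factorial_Ring.prime (p::nat)" and char: "add_pow R p \<one> = \<zero>"
    and pd: "pd_level R p m K J gam" and L: "ideal L R"
    and x: "x \<in> K" and y: "y \<in> K" and xL: "x \<in> L"
  shows "partial_dp R p m gam (p ^ (m + 1)) (x \<oplus> y) \<ominus>
    (partial_dp R p m gam (p ^ (m + 1)) x \<oplus> partial_dp R p m gam (p ^ (m + 1)) y) \<in> L"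
proof -
  have K: "ideal K R" and dp: "divided_powers R J gam"
    and pow_J: "\<And>z. z \<in> K \<Longrightarrow> z [^] (p ^ m) \<in> J"
    using pd by (auto simp: pd_level_def)
  have p0: "p > 0" using p prime_gt_0_nat by blast
  have xc: "x \<in> carrier R" and yc: "y \<in> carrier R" using K x y by (auto intro: ideal.Icarr)
  have "(x \<oplus> y) [^] (p ^ m) = x [^] (p ^ m) \<oplus> y [^] (p ^ m)"
    using frobenius_power_add[OF p char xc yc] .
  moreover have "x \<oplus> y \<in> K" using K x y by (simp add: ideal.axioms(1) additive_subgroup.a_closed)
  moreover have "x [^] (p ^ m) \<in> L" using L xL p0 by (simp add: ideal.I_nat_pow_closed)
  ultimately show ?thesis
    using divided_power_prime_add[OF p char dp L] partial_dp_p_pow_Suc[OF dp p0] pow_J x y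
    by metis
qed

lemma (in cring) partial_dp_p_pow_Suc_mult:
  assumes "p > 0" and pd: "pd_level R p m K J gam" and c: "c \<in> carrier R" and x: "x \<in> K"
  shows "partial_dp R p m gam (p ^ (m + 1)) (c \<otimes> x) =
    c [^] (p ^ (m + 1)) \<otimes> partial_dp R p m gam (p ^ (m + 1)) x"
proof -
  have K: "ideal K R" and dp: "divided_powers R J gam"
    and pow_J: "\<And>z. z \<in> K \<Longrightarrow> z [^] (p ^ m) \<in> J"
    using pd by (auto simp: pd_level_def)
  have xc: "x \<in> carrier R" using K x by (rule ideal.Icarr)
  have "c \<otimes> x \<in> K" using K c x by (simp add: ideal.I_l_closed)
  then have "partial_dp R p m gam (p ^ (m + 1)) (c \<otimes> x) = gam p ((c \<otimes> x) [^] (p ^ m))"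
    using partial_dp_p_pow_Suc[OF dp \<open>p > 0\<close> pow_J] by blast
  also have "\<dots> = gam p (c [^] (p ^ m) \<otimes> x [^] (p ^ m))"
    using c xc by (simp add: nat_pow_distrib)
  also have "\<dots> = (c [^] (p ^ m)) [^] p \<otimes> gam p (x [^] (p ^ m))"
    using dp pow_J[OF x] c unfolding divided_powers_def by simp
  also have "(c [^] (p ^ m)) [^] p = c [^] (p ^ (m + 1))"
    using c by (simp add: nat_pow_pow mult.commute)
  also have "gam p (x [^] (p ^ m)) = partial_dp R p m gam (p ^ (m + 1)) x"
    using partial_dp_p_pow_Suc[OF dp \<open>p > 0\<close> pow_J[OF x]] by simp
  finally show ?thesis .
qed

lemma (in cring) partial_dp_p_pow_Suc_ideal_prod:
  assumes p: "Factorial_Ring.prime (p::nat)" and char: "add_pow R p \<one> = \<zero>" and pd: "pd_level R p m K J gam"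
    and A: "ring A" and h: "h \<in> ring_hom A R" and I: "ideal I A" and hI_K: "h ` I \<subseteq> K"
    and L: "ideal L R" and hI_L: "h ` I \<subseteq> L"
    and \<phi>: "\<phi> \<in> ideal_prod A I I"
  shows "partial_dp R p m gam (p ^ (m + 1)) (h \<phi>) \<in> L"
  using \<phi>
proof (induction rule: ideal_prod.induct)
  case (prod i j)
  interpret L: ideal L R by (rule L)
  have p0: "p > 0" using p by (simp add: prime_gt_0_nat)
  have "h i \<in> L" and "h j \<in> K" using hI_L hI_K prod by auto
  have "h (i \<otimes>\<^bsub>A\<^esub> j) = h i \<otimes> h j"
    using h I prod by (simp add: ring_hom_mult ideal.Icarr)
  also have "partial_dp R p m gam (p ^ (m + 1)) \<dots> =
      h i [^] (p ^ (m + 1)) \<otimes> partial_dp R p m gam (p ^ (m + 1)) (h j)"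
    using partial_dp_p_pow_Suc_mult[OF p0 pd L.Icarr[OF \<open>h i \<in> L\<close>] \<open>h j \<in> K\<close>] .
  finally show ?case
    using L.I_nat_pow_closed[OF \<open>h i \<in> L\<close>] p0 partial_dp_p_pow_Suc_closed[OF p0 pd \<open>h j \<in> K\<close>]
    by (simp add: L.I_r_closed)
next
  case (sum s1 s2)
  interpret L: ideal L R by (rule L)
  have p0: "p > 0" using p by (simp add: prime_gt_0_nat)
  have "s1 \<in> I" and "s2 \<in> I"
    using ring.ideal_prod_inter[OF A I I] sum.hyps by auto
  then have "h s1 \<in> K" "h s2 \<in> K" "h s1 \<in> L" and hom_add: "h (s1 \<oplus>\<^bsub>A\<^esub> s2) = h s1 \<oplus> h s2"
    using hI_K hI_L h I by (auto simp: ring_hom_add ideal.Icarr)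
  moreover have "h s1 \<oplus> h s2 \<in> K"
    using pd \<open>h s1 \<in> K\<close> \<open>h s2 \<in> K\<close>
    by (simp add: pd_level_def additive_subgroup.a_closed ideal.axioms(1))
  ultimately show ?case
    using L.mem_I_if_minus_mem_I partial_dp_p_pow_Suc_add[OF p char pd L]
      partial_dp_p_pow_Suc_closed[OF p0 pd] sum.IH L.a_closed
    by metis
qed

theorem mainTheorem5:
  fixes S :: "('s, 't) ring_scheme" and A :: "('a, 'e) ring_scheme" and P :: "('b, 'c) ring_scheme"
    and p m :: nat and aa bb :: "'s set" and delta :: "nat \<Rightarrow> 's \<Rightarrow> 's" and g :: "'s \<Rightarrow> 'a"
    and I :: "'a set" and h :: "'a \<Rightarrow> 'b" and K J :: "'b set" and gam :: "nat \<Rightarrow> 'b \<Rightarrow> 'b"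
  assumes "Factorial_Ring.prime p"
    and "cring S" and "pd_level S p m aa bb delta"
    and "cring A" and "g \<in> ring_hom S A"
    and "add_pow A p \<one>\<^bsub>A\<^esub> = \<zero>\<^bsub>A\<^esub>"
    and "ideal I A"
    and "is_pd_envelope S bb delta g A I p m P h K J gam"
  shows "(\<forall>\<phi>\<in>I. \<forall>\<psi>\<in>I.
            partial_dp P p m gam (p ^ (m + 1)) (h (\<phi> \<oplus>\<^bsub>A\<^esub> \<psi>)) \<ominus>\<^bsub>P\<^esub>
              (partial_dp P p m gam (p ^ (m + 1)) (h \<phi>) \<oplus>\<^bsub>P\<^esub>
               partial_dp P p m gam (p ^ (m + 1)) (h \<psi>)) \<in> Idl\<^bsub>P\<^esub> (h ` I))
       \<and> (\<forall>f\<in>carrier A. \<forall>\<phi>\<in>I.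
            partial_dp P p m gam (p ^ (m + 1)) (h (f \<otimes>\<^bsub>A\<^esub> \<phi>)) \<ominus>\<^bsub>P\<^esub>
              (h f [^]\<^bsub>P\<^esub> (p ^ (m + 1)) \<otimes>\<^bsub>P\<^esub> partial_dp P p m gam (p ^ (m + 1)) (h \<phi>))
              \<in> Idl\<^bsub>P\<^esub> (h ` I))
       \<and> (\<forall>\<phi>\<in>ideal_prod A I I.
            partial_dp P p m gam (p ^ (m + 1)) (h \<phi>) \<in> Idl\<^bsub>P\<^esub> (h ` I))"
proof -
  note p = assms(1) and p0 = prime_gt_0_nat[OF assms(1)]
  interpret A: cring A by (rule assms(4))
  interpret I: ideal I A by (rule assms(7))
  have P: "cring P" and h: "h \<in> ring_hom A P" and pd: "pd_level P p m K J gam" and hI_K: "h ` I \<subseteq> K"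
    using assms(8) by (simp_all add: is_pd_envelope_def pd_over_def)
  interpret P: cring P by (rule P)
  have "h ` I \<subseteq> carrier P" using h by (auto simp: ring_hom_closed)
  then have L: "ideal (Idl\<^bsub>P\<^esub> (h ` I)) P" and hI_L: "h ` I \<subseteq> Idl\<^bsub>P\<^esub> (h ` I)"
    by (rule P.genideal_ideal, rule P.genideal_self)
  have char: "add_pow P p \<one>\<^bsub>P\<^esub> = \<zero>\<^bsub>P\<^esub>"
    using ring_hom_add_pow[OF h A.ring_axioms P.ring_axioms A.one_closed, of p] assms(6) h
    by (simp add: ring_hom_one ring_hom_zero[OF h A.ring_axioms P.ring_axioms])
  show ?thesis
    apply (intro conjI ballI)
    subgoal for \<phi> \<psi>
      using P.partial_dp_p_pow_Suc_add[OF p char pd L, of "h \<phi>" "h \<psi>"] h hI_K hI_L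
      by (auto simp: ring_hom_add)
    subgoal for f \<phi>
      using P.partial_dp_p_pow_Suc_mult[OF p0 pd, of "h f" "h \<phi>"]
        P.partial_dp_p_pow_Suc_closed[OF p0 pd, of "h \<phi>"] h hI_K
        additive_subgroup.zero_closed[OF ideal.axioms(1)[OF L]]
      by (auto simp: ring_hom_mult ring_hom_closed P.r_neg P.minus_eq)
    subgoal
      by (rule P.partial_dp_p_pow_Suc_ideal_prod[OF p char pd A.ring_axioms h I.is_ideal hI_K L hI_L])
    done
qed

end
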